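(* For any weight matrix $V\in\mathbb{R}^{2p\times(d+1)}$, $\lVert\nabla_VL\rVert\le\sqrt{2p}\,\min\{L(V),1\}$.
   Context: $p\ge1$, $h=1/p$. Huberized ReLU: $\phi(z)=0$ for $z<0$, $z^2/(2h)$ for $z\in[0,h]$, $z-h/2$ for $z>h$. Data $(x_1,y_1),\ldots,(x_n,y_n)$ with $x_s\in\mathbb{R}^{d+1}$, $\lVert x_s\rVert=1$, $y_s\in\{-1,1\}$. For $V$ with rows $v_1,\ldots,v_{2p}$ and fixed $u_1=\cdots=u_p=1$, $u_{p+1}=\cdots=u_{2p}=-1$: $f_V(x)=\sum_{i=1}^{2p}u_i\phi(v_i\cdot x)$, $L(V)=\frac1n\sum_s\ln(1+\exp(-y_sf_V(x_s)))$. $\lVert\cdot\rVert$ is the Frobenius (Euclidean) norm. *)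

theory Defs
  imports "HOL-Analysis.Analysis"
begin

definition hrelu :: "nat \<Rightarrow> real \<Rightarrow> real" where
  "hrelu p z = (let h = 1 / real p in
     if z < 0 then 0 else if z \<le> h then z\<^sup>2 / (2 * h) else z - h / 2)"

text \<open>Fixed output weights: rows indexed by 'p + 'p; Inl rows (the first p) have u = 1,
  Inr rows (the last p) have u = -1.\<close>
definition uw :: "('p + 'p) \<Rightarrow> real" where
  "uw i = (case i of Inl _ \<Rightarrow> 1 | Inr _ \<Rightarrow> -1)"

definition fnet :: "nat \<Rightarrow> real^'d^('p::finite + 'p) \<Rightarrow> real^'d \<Rightarrow> real" where
  "fnet p V x = (\<Sum>i\<in>UNIV. uw i * hrelu p ((V $ i) \<bullet> x))"

definition lossL :: "nat \<Rightarrow> nat \<Rightarrow> (nat \<Rightarrow> real^'d) \<Rightarrow> (nat \<Rightarrow> real)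
                     \<Rightarrow> real^'d^('p::finite + 'p) \<Rightarrow> real" where
  "lossL p n xs ys V = (1 / real n) * (\<Sum>s<n. ln (1 + exp (- ys s * fnet p V (xs s))))"

end

theory Submission
  imports Defs
begin

text \<open>
  The loss is an average of terms \<open>\<ell>(y f_V(x))\<close> with \<open>\<ell>(t) = ln (1 + e\<^sup>-\<^sup>t)\<close>, so its gradient is
  an average of \<open>-y \<sigma>(y f_V(x)) \<nabla>\<^sub>V f_V(x)\<close> with \<open>\<sigma>(t) = e\<^sup>-\<^sup>t / (1 + e\<^sup>-\<^sup>t)\<close>.
  Since \<open>\<phi>' \<in> [0, 1]\<close>, every row of \<open>\<nabla>\<^sub>V f_V(x)\<close> is \<open>\<plusminus>\<phi>'(v\<^sub>i \<bullet> x) x\<close> of norm at most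
  \<open>\<parallel>x\<parallel> = 1\<close>, so \<open>\<parallel>\<nabla>\<^sub>V f_V(x)\<parallel> \<le> \<surd>(2p)\<close>. Finally \<open>\<sigma>(t) \<le> min (\<ell>(t)) 1\<close>
  (by \<open>ln u \<le> u - 1\<close> at \<open>u = 1 / (1 + e\<^sup>-\<^sup>t)\<close>), and averaging preserves this bound.
\<close>

lemma norm_vec_le_sqrt_card:
  fixes x :: "'a::real_normed_vector^'n"
  assumes "\<And>i. norm (x $ i) \<le> M"
  shows "norm x \<le> sqrt (real CARD('n)) * M"
proof -
  have "0 \<le> M" using assms[of undefined] norm_ge_zero order_trans by blast
  have "norm x = sqrt (\<Sum>i\<in>UNIV. (norm (x $ i))\<^sup>2)"
    unfolding norm_vec_def L2_set_def ..
  also have "\<dots> \<le> sqrt (\<Sum>i\<in>(UNIV::'n set). M\<^sup>2)"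
    using assms by (intro real_sqrt_le_mono sum_mono power_mono) auto
  also have "\<dots> = sqrt (real CARD('n)) * M"
    using \<open>0 \<le> M\<close> by (simp add: real_sqrt_mult)
  finally show ?thesis .
qed

lemma GDERIV_sum:
  assumes "\<And>s. s \<in> S \<Longrightarrow> GDERIV (f s) x :> df s"
  shows "GDERIV (\<lambda>x. \<Sum>s\<in>S. f s x) x :> (\<Sum>s\<in>S. df s)"
  using has_derivative_sum[of S f "\<lambda>s h. h \<bullet> df s"] assms
  by (simp add: gderiv_def inner_sum_right)

lemma mean_le_min_mean_one:
  fixes a b :: "nat \<Rightarrow> real"
  assumes "\<And>s. s < n \<Longrightarrow> a s \<le> min (b s) 1"
  shows "(1 / real n) * (\<Sum>s<n. a s) \<le> min ((1 / real n) * (\<Sum>s<n. b s)) 1"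
proof (cases "n = 0")
  case False
  have "(\<Sum>s<n. a s) \<le> (\<Sum>s<n. b s)" "(\<Sum>s<n. a s) \<le> (\<Sum>s<n. 1)"
    using assms by (intro sum_mono; simp)+
  with False show ?thesis by (auto simp: field_simps)
qed simp

definition hrelu_slope :: "nat \<Rightarrow> real \<Rightarrow> real" where
  "hrelu_slope p z = (if z < 0 then 0 else if z \<le> 1 / real p then real p * z else 1)"

lemma hrelu_slope_nonneg: "0 \<le> hrelu_slope p z"
  by (simp add: hrelu_slope_def)

lemma hrelu_slope_le_one: "hrelu_slope p z \<le> 1"
  by (cases "p = 0") (auto simp: hrelu_slope_def mult.commute pos_le_divide_eq)

lemma hrelu_has_real_derivative:
  assumes "p \<ge> 1"
  shows "(hrelu p has_real_derivative hrelu_slope p z) (at z)"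
proof -
  define h where "h = 1 / real p"
  have "h > 0" using assms by (simp add: h_def)
  define g where "g = (\<lambda>z::real. if z \<in> {..h} then z\<^sup>2 / (2*h) else z - h/2)"
  define g' where "g' = (\<lambda>z::real. if z \<in> {..h} then z / h else 1)"
  have g_deriv: "(g has_vector_derivative g' x) (at x within UNIV)" for x
    unfolding g_def g'_def
  proof (rule has_vector_derivative_If_within_closures)
    show "((\<lambda>z. z\<^sup>2 / (2 * h)) has_vector_derivative x / h)
        (at x within {..h} \<union> closure {..h} \<inter> closure {h<..})"
      unfolding has_real_derivative_iff_has_vector_derivative[symmetric]
      using \<open>h > 0\<close> by (auto intro!: derivative_eq_intros simp: field_simps)
    show "((\<lambda>z. z - h/2) has_vector_derivative 1)
        (at x within {h<..} \<union> closure {..h} \<inter> closure {h<..})"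
      unfolding has_real_derivative_iff_has_vector_derivative[symmetric]
      by (auto intro!: derivative_eq_intros)
  qed (use \<open>h > 0\<close> in \<open>auto simp: field_simps power2_eq_square\<close>)
  have "((\<lambda>z. if z \<in> {..<0} then 0 else g z) has_vector_derivative
        (if z \<in> {..<0} then 0 else g' z)) (at z within UNIV)"
  proof (rule has_vector_derivative_If_within_closures)
    show "(g has_vector_derivative g' z) (at z within {0..} \<union> closure {..<0} \<inter> closure {0..})"
      using g_deriv by (rule has_vector_derivative_within_subset) auto
  qed (use \<open>h > 0\<close> in \<open>auto simp: g_def g'_def\<close>)
  moreover have "hrelu p = (\<lambda>z. if z \<in> {..<0} then 0 else g z)"
    by (auto simp: hrelu_def g_def h_def Let_def fun_eq_iff)
  moreover have "hrelu_slope p z = (if z \<in> {..<0} then 0 else g' z)"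
    using \<open>h > 0\<close> by (auto simp: hrelu_slope_def g'_def h_def)
  ultimately show ?thesis
    by (simp add: has_real_derivative_iff_has_vector_derivative)
qed

definition fnet_grad :: "nat \<Rightarrow> real^'d^('p::finite + 'p) \<Rightarrow> real^'d \<Rightarrow> real^'d^('p + 'p)" where
  "fnet_grad p V x = (\<chi> i. (uw i * hrelu_slope p ((V $ i) \<bullet> x)) *\<^sub>R x)"

lemma fnet_has_gderiv:
  assumes "p \<ge> 1"
  shows "GDERIV (\<lambda>V. fnet p V x) V :> fnet_grad p V x"
proof -
  have row: "((\<lambda>W. hrelu p ((W $ i) \<bullet> x)) has_derivative
      (\<lambda>H. hrelu_slope p ((V $ i) \<bullet> x) * ((H $ i) \<bullet> x))) (at V)" for i
  proof -
    have "((\<lambda>W. (W $ i) \<bullet> x) has_derivative (\<lambda>H. (H $ i) \<bullet> x)) (at V)"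
      by (auto intro!: derivative_eq_intros bounded_linear.has_derivative[OF bounded_linear_vec_nth])
    moreover have "(hrelu p has_derivative (\<lambda>t. hrelu_slope p ((V $ i) \<bullet> x) * t)) (at ((V $ i) \<bullet> x))"
      using hrelu_has_real_derivative[OF assms] by (simp add: has_field_derivative_def)
    ultimately show ?thesis by (rule has_derivative_compose)
  qed
  have "((\<lambda>V. fnet p V x) has_derivative
      (\<lambda>H. \<Sum>i\<in>UNIV. uw i * (hrelu_slope p ((V $ i) \<bullet> x) * ((H $ i) \<bullet> x)))) (at V)"
    unfolding fnet_def by (intro has_derivative_sum has_derivative_mult_right row)
  moreover have "H \<bullet> fnet_grad p V x
      = (\<Sum>i\<in>UNIV. uw i * (hrelu_slope p ((V $ i) \<bullet> x) * ((H $ i) \<bullet> x)))" for H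
    unfolding fnet_grad_def inner_vec_def[of H] by (simp add: mult.commute mult.left_commute)
  ultimately show ?thesis
    unfolding gderiv_def by simp
qed

lemma norm_fnet_grad_le: "norm (fnet_grad p V x) \<le> sqrt (2 * real CARD('p)) * norm x"
  for V :: "real^'d^('p::finite + 'p)"
proof -
  have "norm (fnet_grad p V x $ i) \<le> norm x" for i
    using hrelu_slope_nonneg[of p] hrelu_slope_le_one[of p]
    by (auto simp: fnet_grad_def uw_def abs_mult mult_left_le_one_le split: sum.split)
  then show ?thesis
    using norm_vec_le_sqrt_card[of "fnet_grad p V x"] by simp
qed

definition logistic_weight :: "real \<Rightarrow> real" where
  "logistic_weight t = exp (- t) / (1 + exp (- t))"

lemma logistic_weight_nonneg: "0 \<le> logistic_weight t"
  by (simp add: logistic_weight_def add_pos_pos less_imp_le)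

lemma logistic_weight_le_min: "logistic_weight t \<le> min (ln (1 + exp (- t))) 1"
proof -
  define a where "a = exp (- t)"
  have "a > 0" by (simp add: a_def)
  have "ln (1 / (1 + a)) \<le> 1 / (1 + a) - 1"
    using \<open>a > 0\<close> by (intro ln_le_minus_one) simp
  then have "a / (1 + a) \<le> ln (1 + a)"
    using \<open>a > 0\<close> by (simp add: ln_div field_simps)
  moreover have "a / (1 + a) \<le> 1"
    using \<open>a > 0\<close> by simp
  ultimately show ?thesis
    using \<open>a > 0\<close> by (simp add: logistic_weight_def a_def)
qed

lemma logistic_loss_has_real_derivative:
  "((\<lambda>t. ln (1 + exp (c * t))) has_real_derivative c * logistic_weight (- c * t)) (at t)"
proof -
  have "1 + exp (c * t) > 0"
    by (simp add: add_pos_pos)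
  then show ?thesis
    by (auto intro!: derivative_eq_intros simp: logistic_weight_def field_simps)
qed

definition lossL_grad :: "nat \<Rightarrow> nat \<Rightarrow> (nat \<Rightarrow> real^'d) \<Rightarrow> (nat \<Rightarrow> real)
    \<Rightarrow> real^'d^('p::finite + 'p) \<Rightarrow> real^'d^('p + 'p)" where
  "lossL_grad p n xs ys V = (1 / real n) *\<^sub>R
     (\<Sum>s<n. (- ys s * logistic_weight (ys s * fnet p V (xs s))) *\<^sub>R fnet_grad p V (xs s))"

lemma lossL_has_gderiv:
  assumes "p \<ge> 1"
  shows "GDERIV (lossL p n xs ys) V :> lossL_grad p n xs ys V"
proof -
  have "GDERIV (\<lambda>V. ln (1 + exp (- ys s * fnet p V (xs s)))) V :>
      (- ys s * logistic_weight (ys s * fnet p V (xs s))) *\<^sub>R fnet_grad p V (xs s)" for s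
    using GDERIV_DERIV_compose[OF fnet_has_gderiv[OF assms]
        logistic_loss_has_real_derivative[of "- ys s"]] by simp
  then have "GDERIV (\<lambda>V. \<Sum>s<n. ln (1 + exp (- ys s * fnet p V (xs s)))) V :>
      (\<Sum>s<n. (- ys s * logistic_weight (ys s * fnet p V (xs s))) *\<^sub>R fnet_grad p V (xs s))"
    by (rule GDERIV_sum)
  from GDERIV_mult[OF GDERIV_const this, of "1 / real n"] show ?thesis
    by (simp add: lossL_def[abs_def] lossL_grad_def)
qed

lemma norm_lossL_grad_le:
  fixes V :: "real^'d^('p::finite + 'p)"
  assumes "\<And>s. s < n \<Longrightarrow> norm (xs s) = 1" and "\<And>s. s < n \<Longrightarrow> \<bar>ys s\<bar> = 1"
  shows "norm (lossL_grad p n xs ys V) \<le> sqrt (2 * real CARD('p)) * min (lossL p n xs ys V) 1"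
proof -
  define w where "w s = logistic_weight (ys s * fnet p V (xs s))" for s
  have "norm (lossL_grad p n xs ys V)
      = (1 / real n) * norm (\<Sum>s<n. (- ys s * w s) *\<^sub>R fnet_grad p V (xs s))"
    by (simp add: lossL_grad_def w_def)
  also have "\<dots> \<le> (1 / real n) * (\<Sum>s<n. norm ((- ys s * w s) *\<^sub>R fnet_grad p V (xs s)))"
    by (intro mult_left_mono norm_sum) simp
  also have "\<dots> \<le> (1 / real n) * (\<Sum>s<n. w s * sqrt (2 * real CARD('p)))"
  proof (intro mult_left_mono sum_mono)
    fix s assume "s \<in> {..<n}"
    then show "norm ((- ys s * w s) *\<^sub>R fnet_grad p V (xs s)) \<le> w s * sqrt (2 * real CARD('p))"
      using assms[of s] norm_fnet_grad_le[of p V "xs s"] logistic_weight_nonneg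
      by (auto simp: w_def abs_mult intro!: mult_left_mono)
  qed simp
  also have "\<dots> = sqrt (2 * real CARD('p)) * ((1 / real n) * (\<Sum>s<n. w s))"
    by (simp add: sum_distrib_right[symmetric] mult.commute)
  also have "\<dots> \<le> sqrt (2 * real CARD('p)) * min (lossL p n xs ys V) 1"
  proof -
    have "(1 / real n) * (\<Sum>s<n. w s) \<le> min (lossL p n xs ys V) 1"
      unfolding lossL_def
      by (rule mean_le_min_mean_one) (unfold w_def minus_mult_left[symmetric], rule logistic_weight_le_min)
    then show ?thesis by (intro mult_left_mono) simp_all
  qed
  finally show ?thesis .
qed

theorem lemma3:
  fixes V :: "real^'d^('p::finite + 'p)"
    and xs :: "nat \<Rightarrow> real^'d" and ys :: "nat \<Rightarrow> real" and n p :: nat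
  assumes "CARD('p) = p" and "p \<ge> 1"
    and "\<And>s. s < n \<Longrightarrow> norm (xs s) = 1"
    and "\<And>s. s < n \<Longrightarrow> ys s \<in> {-1, 1}"
  shows "\<exists>G. (GDERIV (lossL p n xs ys) V :> G)
             \<and> norm G \<le> sqrt (2 * real p) * min (lossL p n xs ys V) 1"
proof (intro exI conjI)
  show "GDERIV (lossL p n xs ys) V :> lossL_grad p n xs ys V"
    using assms(2) by (rule lossL_has_gderiv)
  have "\<bar>ys s\<bar> = 1" if "s < n" for s
    using assms(4)[OF that] by auto
  with assms(3) show "norm (lossL_grad p n xs ys V) \<le> sqrt (2 * real p) * min (lossL p n xs ys V) 1"
    unfolding assms(1)[symmetric] by (rule norm_lossL_grad_le)
qed

end
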